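(* Let $P,P'\subset\mathbb{R}^d$ be polytopes, each inscribed into a sphere centered at the origin, with the same normal fan $\mathcal{N}(P)=\mathcal{N}(P')$. If some point $v$ is a vertex of both $P$ and $P'$ with the same normal cone $N_vP=N_vP'$, then $P=P'$. That is, an inscribed polytope with inscribing sphere centered at the origin is completely determined by its normal fan and a single vertex.
   Context: For a polytope $P$ and $c\in\mathbb{R}^d$, $P^c$ is the face maximizing $\langle c,x\rangle$. The normal cone of a face $F$ is $N_FP=\{c: F\subseteq P^c\}$; the normal fan $\mathcal{N}(P)$ is the collection of all normal cones of faces of $P$. *)

theory Defs
  imports "HOL-Analysis.Analysis"
begin

definition max_face :: "'a::euclidean_space set \<Rightarrow> 'a \<Rightarrow> 'a set" where
  "max_face P c = {x \<in> P. \<forall>y \<in> P. c \<bullet> y \<le> c \<bullet> x}"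

definition normal_cone :: "'a::euclidean_space set \<Rightarrow> 'a set \<Rightarrow> 'a set" where
  "normal_cone P F = {c. F \<subseteq> max_face P c}"

definition normal_fan :: "'a::euclidean_space set \<Rightarrow> 'a set set" where
  "normal_fan P = {normal_cone P F | F. F face_of P \<and> F \<noteq> {}}"

definition inscribed_origin :: "'a::euclidean_space set \<Rightarrow> bool" where
  "inscribed_origin P = (\<exists>r. \<forall>v. v extreme_point_of P \<longrightarrow> norm v = r)"

end

theory Submission
  imports Defs
begin

text \<open>Let w be a vertex of P, exposed by a direction c1; it suffices that P' exposes the same
  face in direction c1. Walk from a generic direction c0 in the interior of the normal cone of v
  to c1. By genericity every direction on the way exposes a vertex or an edge of P. Whether P
  and P' expose the same face is locally constant along the walk: at a vertex because a
  direction interior to a normal cone exposes a single point, at an edge [a, b] because equal normal cones force the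
  face of P' onto the line through a and b, which meets the common sphere only in a and b.
  Since the segment from c0 to c1 is connected, the agreement at c0 propagates to c1.\<close>

lemma max_face_subset: "max_face P c \<subseteq> P"
  by (auto simp: max_face_def)

lemma max_face_inner_eq: "x \<in> max_face P c \<Longrightarrow> y \<in> max_face P c \<Longrightarrow> c \<bullet> x = c \<bullet> y"
  by (auto simp: max_face_def intro: antisym)

lemma max_face_nonempty:
  fixes P :: "'a::euclidean_space set"
  assumes "compact P" "P \<noteq> {}"
  shows "max_face P c \<noteq> {}"
proof -
  have "continuous_on P (\<lambda>x. c \<bullet> x)"
    by (intro continuous_intros)
  then obtain x where "x \<in> P" "\<forall>y\<in>P. c \<bullet> y \<le> c \<bullet> x"
    using continuous_attains_sup[OF assms] by blast
  then show ?thesis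
    by (auto simp: max_face_def)
qed

lemma max_face_face_of:
  fixes P :: "'a::euclidean_space set"
  assumes "compact P" "convex P"
  shows "max_face P c face_of P"
proof (cases "P = {}")
  case True
  then show ?thesis
    by (simp add: max_face_def)
next
  case False
  then obtain x where x: "x \<in> max_face P c"
    using max_face_nonempty[OF assms(1)] by blast
  then have "max_face P c = P \<inter> {y. c \<bullet> y = c \<bullet> x}"
    by (auto simp: max_face_def intro: antisym)
  moreover have "\<And>y. y \<in> P \<Longrightarrow> c \<bullet> y \<le> c \<bullet> x"
    using x by (auto simp: max_face_def)
  ultimately show ?thesis
    using face_of_Int_supporting_hyperplane_le[OF assms(2)] by simp
qed

lemma max_face_restrict:
  assumes "max_face P c \<subseteq> F" "F \<subseteq> P" "max_face P c \<noteq> {}"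
  shows "max_face F c = max_face P c"
proof -
  obtain z where z: "z \<in> max_face P c"
    using assms(3) by blast
  then have "\<forall>y\<in>P. c \<bullet> y \<le> c \<bullet> z" "z \<in> F"
    using assms(1) by (auto simp: max_face_def)
  then show ?thesis
    using assms(1,2) by (force simp: max_face_def)
qed

lemma polytope_max_face:
  fixes P :: "'a::euclidean_space set"
  assumes "polytope P"
  shows "max_face P c face_of P" "compact (max_face P c)" "convex (max_face P c)"
proof -
  have P: "compact P" "convex P"
    using assms by (simp_all add: polytope_imp_compact polytope_imp_convex)
  show F: "max_face P c face_of P"
    by (rule max_face_face_of[OF P])
  show "compact (max_face P c)"
    by (rule face_of_imp_compact[OF P(2,1) F])
  show "convex (max_face P c)"
    by (rule face_of_imp_convex[OF F])
qed

lemma max_face_subset_if_extreme_points_below: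
  fixes P :: "'a::euclidean_space set"
  assumes "polytope P" "convex G" "x0 \<in> P"
    and below: "\<And>y. y extreme_point_of P \<Longrightarrow> y \<notin> G \<Longrightarrow> c \<bullet> y < c \<bullet> x0"
  shows "max_face P c \<subseteq> G"
proof -
  have "y \<in> G" if y: "y extreme_point_of max_face P c" for y
  proof (rule ccontr)
    assume "y \<notin> G"
    have "y extreme_point_of P" "y \<in> max_face P c"
      using y extreme_point_of_face[OF polytope_max_face(1)[OF assms(1)]] by auto
    then have "c \<bullet> x0 \<le> c \<bullet> y"
      using assms(3) by (simp add: max_face_def)
    with below[OF \<open>y extreme_point_of P\<close> \<open>y \<notin> G\<close>] show False
      by simp
  qed
  then have "convex hull {y. y extreme_point_of max_face P c} \<subseteq> G"
    using assms(2) by (intro hull_minimal subsetI) auto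
  then show ?thesis
    using Krein_Milman_Minkowski[OF polytope_max_face(2,3)[OF assms(1)]] by simp
qed

text \<open>Each of the finitely many vertices outside the face exposed by c stays strictly below
  that face for all c' near c.\<close>

lemma eventually_max_face_subset:
  fixes P :: "'a::euclidean_space set"
  assumes "polytope P"
  shows "eventually (\<lambda>c'. max_face P c' \<subseteq> max_face P c) (nhds c)"
proof (cases "P = {}")
  case True
  then show ?thesis
    by (simp add: max_face_def)
next
  case False
  define E where "E = {x. x extreme_point_of P}"
  have "finite E"
    unfolding E_def by (rule finite_polyhedron_extreme_points[OF polytope_imp_polyhedron[OF assms]])
  obtain x0 where x0: "x0 \<in> max_face P c"
    using max_face_nonempty[OF polytope_imp_compact[OF assms] False] by blast
  have "eventually (\<lambda>c'. c' \<bullet> y < c' \<bullet> x0) (nhds c)" if y: "y \<in> E - max_face P c" for y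
  proof -
    have "y \<in> P"
      using y by (auto simp: E_def extreme_point_of_def)
    with y x0 have "c \<bullet> (x0 - y) > 0"
      by (auto simp: max_face_def inner_diff_right)
    moreover have "((\<lambda>c'. c' \<bullet> (x0 - y)) \<longlongrightarrow> c \<bullet> (x0 - y)) (nhds c)"
      by (intro tendsto_intros filterlim_ident)
    ultimately have "eventually (\<lambda>c'. c' \<bullet> (x0 - y) > 0) (nhds c)"
      using order_tendstoD(1) by blast
    then show ?thesis
      by eventually_elim (simp add: inner_diff_right)
  qed
  then have "eventually (\<lambda>c'. \<forall>y\<in>E - max_face P c. c' \<bullet> y < c' \<bullet> x0) (nhds c)"
    using \<open>finite E\<close> by (simp add: eventually_ball_finite)
  then show ?thesis
    by eventually_elim
      (rule max_face_subset_if_extreme_points_below[OF assms polytope_max_face(3)[OF assms]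
        max_face_subset[THEN subsetD, OF x0]], auto simp: E_def)
qed

lemma polytope_extreme_point_max_face:
  fixes P :: "'a::euclidean_space set"
  assumes "polytope P" "w extreme_point_of P"
  obtains c where "max_face P c = {w}"
proof -
  have "{w} exposed_face_of P"
    using assms exposed_face_of_polyhedron polytope_imp_polyhedron face_of_singleton by blast
  then obtain a b where ab: "P \<subseteq> {x. a \<bullet> x \<le> b}" "{w} = P \<inter> {x. a \<bullet> x = b}"
    unfolding exposed_face_of_def by blast
  have w: "w \<in> P" "a \<bullet> w = b"
    using ab(2) by blast+
  have "x \<in> max_face P a \<longleftrightarrow> x \<in> P \<and> a \<bullet> x = b" for x
  proof
    assume "x \<in> max_face P a"
    then have "x \<in> P" "a \<bullet> w \<le> a \<bullet> x"
      using w(1) by (auto simp: max_face_def)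
    then show "x \<in> P \<and> a \<bullet> x = b"
      using ab(1) w(2) by fastforce
  qed (use ab(1) w in \<open>auto simp: max_face_def\<close>)
  then have "max_face P a = {w}"
    using ab(2) by blast
  then show ?thesis
    using that by blast
qed

lemma normal_cone_antimono: "F \<subseteq> G \<Longrightarrow> normal_cone P G \<subseteq> normal_cone P F"
  by (auto simp: normal_cone_def)

lemma in_normal_cone_max_face: "c \<in> normal_cone P (max_face P c)"
  by (simp add: normal_cone_def)

lemma normal_cone_inner_eq:
  "c \<in> normal_cone P F \<Longrightarrow> x \<in> F \<Longrightarrow> y \<in> F \<Longrightarrow> c \<bullet> x = c \<bullet> y"
  unfolding normal_cone_def using max_face_inner_eq by blast

lemma normal_fan_eq_imp_normal_cone_max_face_subset:
  fixes P P' :: "'a::euclidean_space set"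
  assumes "normal_fan P = normal_fan P'" "compact P" "convex P" "P \<noteq> {}"
  shows "normal_cone P' (max_face P' c) \<subseteq> normal_cone P (max_face P c)"
proof -
  have "max_face P c face_of P" "max_face P c \<noteq> {}"
    using max_face_face_of max_face_nonempty assms(2-4) by auto
  then have "normal_cone P (max_face P c) \<in> normal_fan P"
    unfolding normal_fan_def by blast
  then obtain F' where F': "normal_cone P (max_face P c) = normal_cone P' F'"
    using assms(1) unfolding normal_fan_def by blast
  then have "c \<in> normal_cone P' F'"
    using in_normal_cone_max_face by metis
  then have "F' \<subseteq> max_face P' c"
    by (simp add: normal_cone_def)
  then show ?thesis
    by (simp add: F' normal_cone_antimono)
qed

lemma normal_fan_eq_imp_normal_cone_max_face_eq:
  fixes P P' :: "'a::euclidean_space set"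
  assumes "normal_fan P = normal_fan P'" "polytope P" "polytope P'" "P \<noteq> {}" "P' \<noteq> {}"
  shows "normal_cone P (max_face P c) = normal_cone P' (max_face P' c)"
proof (rule subset_antisym)
  show "normal_cone P (max_face P c) \<subseteq> normal_cone P' (max_face P' c)"
    using normal_fan_eq_imp_normal_cone_max_face_subset[of P' P] assms
    by (simp add: polytope_imp_compact polytope_imp_convex)
  show "normal_cone P' (max_face P' c) \<subseteq> normal_cone P (max_face P c)"
    using normal_fan_eq_imp_normal_cone_max_face_subset[of P P'] assms
    by (simp add: polytope_imp_compact polytope_imp_convex)
qed

text \<open>Perturbing c towards another point x of the exposed face would make x beat a.\<close>

lemma interior_normal_cone_imp_max_face_eq:
  fixes c :: "'a::euclidean_space"
  assumes "c \<in> interior (normal_cone P F)" "a \<in> F"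
  shows "max_face P c = {a}"
proof -
  obtain e where e: "e > 0" "ball c e \<subseteq> normal_cone P F"
    using assms(1) mem_interior by blast
  have a: "a \<in> max_face P (c + u)" if "norm u < e" for u
  proof -
    have "c + u \<in> ball c e"
      using that by (simp add: dist_norm)
    then show ?thesis
      using e(2) assms(2) by (auto simp: normal_cone_def)
  qed
  have a0: "a \<in> max_face P c"
    using a[of 0] e(1) by simp
  have "x = a" if x: "x \<in> max_face P c" for x
  proof (rule ccontr)
    assume "x \<noteq> a"
    define u where "u = (e / 2 / norm (x - a)) *\<^sub>R (x - a)"
    have "norm u < e" "u \<bullet> (x - a) > 0"
      using \<open>x \<noteq> a\<close> e(1) by (simp_all add: u_def)
    moreover have "c \<bullet> x = c \<bullet> a"
      using max_face_inner_eq x a0 by blast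
    moreover have "(c + u) \<bullet> x \<le> (c + u) \<bullet> a"
      using a[OF \<open>norm u < e\<close>] x by (auto simp: max_face_def)
    ultimately show False
      by (simp add: inner_add_left inner_diff_right)
  qed
  with a0 show ?thesis
    by blast
qed

lemma max_face_eq_singleton_imp_interior_normal_cone:
  fixes P :: "'a::euclidean_space set"
  assumes "polytope P" "max_face P c = {a}"
  shows "c \<in> interior (normal_cone P {a})"
proof -
  have "P \<noteq> {}"
    using assms(2) max_face_subset by blast
  then have "max_face P c' \<noteq> {}" for c'
    using max_face_nonempty assms(1) polytope_imp_compact by blast
  then have "max_face P c' \<subseteq> {a} \<Longrightarrow> c' \<in> normal_cone P {a}" for c'
    by (simp add: normal_cone_def subset_singleton_iff)
  then have "eventually (\<lambda>c'. c' \<in> normal_cone P {a}) (nhds c)"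
    using eventually_max_face_subset[OF assms(1), of c] assms(2) eventually_mono by force
  then obtain S where "open S" "c \<in> S" "S \<subseteq> normal_cone P {a}"
    unfolding eventually_nhds by blast
  then show ?thesis
    by (rule interiorI)
qed

lemma line_sphere_intersection:
  fixes p q :: "'a::real_inner"
  assumes "norm p = r" "norm q = r" "norm (p + \<mu> *\<^sub>R (q - p)) = r" "p \<noteq> q"
  shows "\<mu> = 0 \<or> \<mu> = 1"
proof -
  define d where "d = q - p"
  have "(p + d) \<bullet> (p + d) = p \<bullet> p" "(p + \<mu> *\<^sub>R d) \<bullet> (p + \<mu> *\<^sub>R d) = p \<bullet> p"
    using assms(1-3) by (simp_all add: d_def dot_square_norm)
  then have "2 * (p \<bullet> d) = - (d \<bullet> d)" "2 * \<mu> * (p \<bullet> d) + \<mu> * \<mu> * (d \<bullet> d) = 0"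
    by (simp_all add: inner_add_left inner_add_right inner_commute algebra_simps)
  then have "\<mu> * (\<mu> - 1) * (d \<bullet> d) = 0"
    by (simp add: algebra_simps)
  moreover have "d \<bullet> d \<noteq> 0"
    using assms(4) by (simp add: d_def)
  ultimately show ?thesis
    by simp
qed

lemma sphere_three_points_affinely_independent:
  fixes p q s :: "'a::real_inner"
  assumes "norm p = r" "norm q = r" "norm s = r" "p \<noteq> q" "p \<noteq> s" "q \<noteq> s"
    and "\<alpha> *\<^sub>R (q - p) + \<beta> *\<^sub>R (s - p) = 0"
  shows "\<alpha> = 0 \<and> \<beta> = 0"
proof (cases "\<beta> = 0")
  case True
  then show ?thesis
    using assms(4,7) by simp
next
  case False
  have "\<beta> *\<^sub>R (s - p) = (- \<alpha>) *\<^sub>R (q - p)"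
    using assms(7) by (simp add: add_eq_0_iff2 add.commute)
  define \<mu> where "\<mu> = - \<alpha> / \<beta>"
  have "s - p = inverse \<beta> *\<^sub>R (\<beta> *\<^sub>R (s - p))"
    using False by simp
  also have "\<dots> = \<mu> *\<^sub>R (q - p)"
    using \<open>\<beta> *\<^sub>R (s - p) = _\<close> by (simp add: \<mu>_def divide_inverse_commute)
  finally have s: "s = p + \<mu> *\<^sub>R (q - p)"
    by (metis add.commute diff_add_cancel)
  have "norm (p + \<mu> *\<^sub>R (q - p)) = r"
    using assms(3) s by simp
  then have "\<mu> = 0 \<or> \<mu> = 1"
    using line_sphere_intersection[OF assms(1,2) _ assms(4)] by blast
  then have "s = p \<or> s = q"
    using s by auto
  then show ?thesis
    using assms(5,6) by auto
qed

lemma orthogonal_near_imp_parallel: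
  fixes c d y :: "'a::real_inner"
  assumes "c \<bullet> d = 0" "eventually (\<lambda>c'. c' \<bullet> d = 0 \<longrightarrow> c' \<bullet> y = 0) (nhds c)"
  shows "\<exists>k. y = k *\<^sub>R d"
proof -
  obtain e where e: "e > 0" "\<And>c'. dist c' c < e \<Longrightarrow> c' \<bullet> d = 0 \<longrightarrow> c' \<bullet> y = 0"
    using assms(2) unfolding eventually_nhds_metric by blast
  have "c \<bullet> y = 0"
    using e assms(1) by simp
  define w where "w = y - ((y \<bullet> d) / (d \<bullet> d)) *\<^sub>R d"
  have "w \<bullet> d = 0"
    by (cases "d = 0") (simp_all add: w_def inner_diff_left)
  have "w = 0"
  proof (rule ccontr)
    assume "w \<noteq> 0"
    define c' where "c' = c + (e / 2 / norm w) *\<^sub>R w"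
    have "dist c' c < e" "c' \<bullet> d = 0"
      using \<open>w \<noteq> 0\<close> e(1) assms(1) \<open>w \<bullet> d = 0\<close> by (simp_all add: c'_def dist_norm inner_add_left)
    then have "c' \<bullet> y = 0"
      using e(2) by blast
    then have "w \<bullet> y = 0"
      using \<open>c \<bullet> y = 0\<close> \<open>w \<noteq> 0\<close> e(1) by (simp add: c'_def inner_add_left)
    then have "w \<bullet> w = 0"
      using \<open>w \<bullet> d = 0\<close> by (simp add: w_def inner_diff_right inner_commute)
    then show False
      using \<open>w \<noteq> 0\<close> by simp
  qed
  then have "y = ((y \<bullet> d) / (d \<bullet> d)) *\<^sub>R d"
    by (simp add: w_def)
  then show ?thesis
    by (rule exI)
qed

lemma eventually_in_normal_cone_if_segment:
  fixes P :: "'a::euclidean_space set"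
  assumes "polytope P" "max_face P c = closed_segment a b"
  shows "eventually (\<lambda>c'. c' \<bullet> (b - a) = 0 \<longrightarrow> c' \<in> normal_cone P (max_face P c)) (nhds c)"
  using eventually_max_face_subset[OF assms(1), of c]
proof eventually_elim
  case (elim c')
  show ?case
  proof
    assume c': "c' \<bullet> (b - a) = 0"
    have const: "c' \<bullet> y = c' \<bullet> a" if y: "y \<in> closed_segment a b" for y
    proof -
      obtain u where "y = (1 - u) *\<^sub>R a + u *\<^sub>R b"
        using y by (auto simp: in_segment)
      then have "y = a + u *\<^sub>R (b - a)"
        by (simp add: algebra_simps)
      then show ?thesis
        using c' by (simp add: inner_add_right)
    qed
    have "a \<in> max_face P c"
      using assms(2) by simp
    then have "P \<noteq> {}"
      using max_face_subset by blast
    then obtain z where z: "z \<in> max_face P c'"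
      using max_face_nonempty[OF polytope_imp_compact[OF assms(1)], of c'] by auto
    have "y \<in> max_face P c'" if y: "y \<in> max_face P c" for y
    proof -
      have "z \<in> closed_segment a b" "y \<in> closed_segment a b"
        using z y elim assms(2) by auto
      then have "c' \<bullet> y = c' \<bullet> z"
        using const by metis
      then show ?thesis
        using y z max_face_subset by (auto simp: max_face_def)
    qed
    then show "c' \<in> normal_cone P (max_face P c)"
      by (auto simp: normal_cone_def)
  qed
qed

lemma extreme_point_max_face_if_segment:
  fixes P P' :: "'a::euclidean_space set"
  assumes "polytope P" "polytope P'"
    and rP: "\<forall>x. x extreme_point_of P \<longrightarrow> norm x = r"
    and rP': "\<forall>x. x extreme_point_of P' \<longrightarrow> norm x = r"
    and N: "normal_cone P (max_face P c) = normal_cone P' (max_face P' c)"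
    and F: "max_face P c = closed_segment a b" and a: "a \<in> max_face P' c" and "a \<noteq> b"
    and x: "x extreme_point_of max_face P' c"
  shows "x = a \<or> x = b"
proof -
  have "y extreme_point_of max_face P c" if "y \<in> {a, b}" for y
    using that by (auto simp: F extreme_point_of_segment)
  then have "y extreme_point_of P" if "y \<in> {a, b}" for y
    using that extreme_point_of_face[OF polytope_max_face(1)[OF assms(1)]] by blast
  then have norm_ab: "norm a = r" "norm b = r"
    using rP by auto
  have x': "x extreme_point_of P'" "x \<in> max_face P' c"
    using x extreme_point_of_face[OF polytope_max_face(1)[OF assms(2)]] by auto
  have "c \<bullet> (b - a) = 0"
    using max_face_inner_eq[of b P c a] F by (simp add: inner_diff_right)
  then have "\<exists>k. x - a = k *\<^sub>R (b - a)"
  proof (rule orthogonal_near_imp_parallel)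
    show "eventually (\<lambda>c'. c' \<bullet> (b - a) = 0 \<longrightarrow> c' \<bullet> (x - a) = 0) (nhds c)"
      using eventually_in_normal_cone_if_segment[OF assms(1) F]
    proof eventually_elim
      case (elim c')
      then show ?case
        using normal_cone_inner_eq[of c' P' "max_face P' c" x a] N x'(2) a
        by (auto simp: inner_diff_right)
    qed
  qed
  then obtain k where k: "x = a + k *\<^sub>R (b - a)"
    by (metis add.commute diff_add_cancel)
  then have "k = 0 \<or> k = 1"
    using line_sphere_intersection[OF norm_ab _ \<open>a \<noteq> b\<close>] rP' x'(1) by simp
  then show ?thesis
    using k by auto
qed

lemma max_face_eq_if_segment:
  fixes P P' :: "'a::euclidean_space set"
  assumes "polytope P" "polytope P'"
    and rP: "\<forall>x. x extreme_point_of P \<longrightarrow> norm x = r"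
    and rP': "\<forall>x. x extreme_point_of P' \<longrightarrow> norm x = r"
    and N: "normal_cone P (max_face P c) = normal_cone P' (max_face P' c)"
    and F: "max_face P c = closed_segment a b" and a: "a \<in> max_face P' c"
  shows "max_face P' c = max_face P c"
proof (cases "a = b")
  case True
  then have "c \<in> interior (normal_cone P (max_face P c))"
    using max_face_eq_singleton_imp_interior_normal_cone[OF assms(1)] F by simp
  then have "c \<in> interior (normal_cone P' (max_face P' c))"
    using N by simp
  then show ?thesis
    using interior_normal_cone_imp_max_face_eq a F True by simp
next
  case False
  define F' where "F' = max_face P' c"
  have F'_hull: "F' = convex hull {x. x extreme_point_of F'}"
    unfolding F'_def by (rule Krein_Milman_Minkowski[OF polytope_max_face(2,3)[OF assms(2)]])
  have "F' \<noteq> {}"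
    using a by (auto simp: F'_def)
  then obtain y where "y extreme_point_of F'"
    using extreme_point_exists_convex[OF polytope_max_face(2,3)[OF assms(2)]] by (auto simp: F'_def)
  then consider "{x. x extreme_point_of F'} = {a, b}" | y where "{x. x extreme_point_of F'} = {y}"
    using extreme_point_max_face_if_segment[OF assms False] unfolding F'_def by blast
  then show ?thesis
  proof cases
    case 1
    then show ?thesis
      using F'_hull F by (simp add: F'_def segment_convex_hull)
  next
    case (2 y)
    then have "c \<in> interior (normal_cone P (max_face P c))"
      using max_face_eq_singleton_imp_interior_normal_cone[OF assms(2)] F'_hull N
      by (simp add: F'_def)
    then have "max_face P c = {a}"
      by (rule interior_normal_cone_imp_max_face_eq) (simp add: F)
    then show ?thesis
      using F False by (metis ends_in_segment(2) singletonD)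
  qed
qed

lemma eventually_max_face_eq_iff:
  fixes P P' :: "'a::euclidean_space set"
  assumes "polytope P" "polytope P'" "P' \<noteq> {}"
    and rP: "\<forall>x. x extreme_point_of P \<longrightarrow> norm x = r"
    and rP': "\<forall>x. x extreme_point_of P' \<longrightarrow> norm x = r"
    and N: "\<And>c. normal_cone P (max_face P c) = normal_cone P' (max_face P' c)"
    and F: "max_face P c = closed_segment a b"
  shows "eventually (\<lambda>c'. max_face P c' = max_face P' c' \<longleftrightarrow> max_face P c = max_face P' c) (nhds c)"
  using eventually_max_face_subset[OF assms(1), of c] eventually_max_face_subset[OF assms(2), of c]
proof eventually_elim
  case (elim c')
  have "P \<noteq> {}"
    using F max_face_subset by (metis ends_in_segment(1) empty_iff subsetD)
  then have ne: "max_face P c' \<noteq> {}" "max_face P' c' \<noteq> {}"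
    using max_face_nonempty polytope_imp_compact assms(1-3) by auto
  show ?case
  proof
    assume eq': "max_face P c' = max_face P' c'"
    obtain x where x: "x extreme_point_of max_face P c'"
      using extreme_point_exists_convex[OF polytope_max_face(2,3)[OF assms(1)] ne(1)] by blast
    then have "x extreme_point_of P" "x \<in> max_face P c'"
      using extreme_point_of_face[OF polytope_max_face(1)[OF assms(1)]] by auto
    then have "x extreme_point_of max_face P c"
      using elim(1) extreme_point_of_face[OF polytope_max_face(1)[OF assms(1)]] by blast
    then have "x = a \<or> x = b"
      using F extreme_point_of_segment by metis
    moreover have "x \<in> max_face P' c"
      using eq' elim(2) \<open>x \<in> max_face P c'\<close> by blast
    ultimately show "max_face P c = max_face P' c"
      using max_face_eq_if_segment[OF assms(1,2) rP rP' N] F closed_segment_commute by metis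
  next
    assume "max_face P c = max_face P' c"
    then show "max_face P c' = max_face P' c'"
      using max_face_restrict[OF elim(1) max_face_subset ne(1)]
        max_face_restrict[OF elim(2) max_face_subset ne(2)] by simp
  qed
qed

lemma closed_segment_if_no_three_extreme_points:
  fixes F :: "'a::euclidean_space set"
  assumes "compact F" "convex F" "F \<noteq> {}"
    and three: "\<And>p q s. p extreme_point_of F \<Longrightarrow> q extreme_point_of F \<Longrightarrow> s extreme_point_of F
      \<Longrightarrow> p = q \<or> p = s \<or> q = s"
  obtains a b where "F = closed_segment a b"
proof -
  define E where "E = {x. x extreme_point_of F}"
  obtain a where a: "a \<in> E"
    using extreme_point_exists_convex[OF assms(1-3)] by (auto simp: E_def)
  have F: "F = convex hull E"
    unfolding E_def using Krein_Milman_Minkowski[OF assms(1,2)] .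
  show ?thesis
  proof (cases "E = {a}")
    case True
    then show ?thesis
      using that[of a a] F by simp
  next
    case False
    then obtain b where b: "b \<in> E" "b \<noteq> a"
      using a by blast
    then have "E = {a, b}"
      using three a by (auto simp: E_def)
    then show ?thesis
      using that[of a b] F by (simp add: segment_convex_hull)
  qed
qed

text \<open>The start points c0 for which the segment towards c1 meets the codimension-2 subspace
  orthogonal to d1 and d2 lie in the span of that subspace and c1; its normal m is the
  vector of span {d1, d2} orthogonal to c1.\<close>

lemma segment_meets_orthogonal_complement_hyperplane:
  fixes d1 d2 c1 :: "'a::real_inner"
  assumes indep: "\<And>\<alpha> \<beta>. \<alpha> *\<^sub>R d1 + \<beta> *\<^sub>R d2 = 0 \<Longrightarrow> \<alpha> = 0 \<and> \<beta> = 0"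
  obtains n where "n \<noteq> 0"
    "\<And>c0 t. t \<noteq> 1 \<Longrightarrow> ((1 - t) *\<^sub>R c0 + t *\<^sub>R c1) \<bullet> d1 = 0 \<Longrightarrow>
      ((1 - t) *\<^sub>R c0 + t *\<^sub>R c1) \<bullet> d2 = 0 \<Longrightarrow> n \<bullet> c0 = 0"
proof -
  define m where "m = (c1 \<bullet> d2) *\<^sub>R d1 - (c1 \<bullet> d1) *\<^sub>R d2"
  have eqs: "(1 - t) * (c0 \<bullet> d1) = - t * (c1 \<bullet> d1)" "(1 - t) * (c0 \<bullet> d2) = - t * (c1 \<bullet> d2)"
    if "((1 - t) *\<^sub>R c0 + t *\<^sub>R c1) \<bullet> d1 = 0" "((1 - t) *\<^sub>R c0 + t *\<^sub>R c1) \<bullet> d2 = 0" for c0 t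
    using that by (simp_all add: inner_add_left algebra_simps)
  show ?thesis
  proof (cases "m = 0")
    case True
    then have "c1 \<bullet> d1 = 0"
      using indep[of "c1 \<bullet> d2" "- (c1 \<bullet> d1)"] by (simp add: m_def)
    show ?thesis
    proof (rule that[of d1])
      show "d1 \<noteq> 0"
        using indep[of 1 0] by auto
      fix c0 t
      assume "t \<noteq> 1" and on_d: "((1 - t) *\<^sub>R c0 + t *\<^sub>R c1) \<bullet> d1 = 0"
        "((1 - t) *\<^sub>R c0 + t *\<^sub>R c1) \<bullet> d2 = 0"
      have "(1 - t) * (c0 \<bullet> d1) = 0"
        using eqs(1)[OF on_d] \<open>c1 \<bullet> d1 = 0\<close> by simp
      then show "d1 \<bullet> c0 = 0"
        using \<open>t \<noteq> 1\<close> by (simp add: inner_commute)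
    qed
  next
    case False
    have "n \<bullet> c0 = 0"
      if "t \<noteq> 1" "((1 - t) *\<^sub>R c0 + t *\<^sub>R c1) \<bullet> d1 = 0" "((1 - t) *\<^sub>R c0 + t *\<^sub>R c1) \<bullet> d2 = 0"
        and n: "n = m" for c0 t n
    proof -
      have "(1 - t) * (c0 \<bullet> m)
          = (c1 \<bullet> d2) * ((1 - t) * (c0 \<bullet> d1)) - (c1 \<bullet> d1) * ((1 - t) * (c0 \<bullet> d2))"
        by (simp add: m_def inner_diff_right algebra_simps)
      also have "\<dots> = 0"
        unfolding eqs[OF that(2,3)] by (simp add: algebra_simps)
      finally show ?thesis
        using that(1) n by (simp add: inner_commute)
    qed
    then show ?thesis
      using that[of m] False by blast
  qed
qed

lemma open_avoids_finite_hyperplanes: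
  fixes N :: "'a::real_inner set"
  assumes "finite N" "0 \<notin> N" "open U" "U \<noteq> {}"
  shows "\<exists>x\<in>U. \<forall>n\<in>N. n \<bullet> x \<noteq> 0"
  using assms
proof (induction N arbitrary: U rule: finite_induct)
  case empty
  then show ?case
    by blast
next
  case (insert n N)
  define U' where "U' = U \<inter> {x. n \<bullet> x \<noteq> 0}"
  have "open U'"
    unfolding U'_def by (intro open_Int insert.prems open_Collect_neq continuous_intros)
  moreover have "U' \<noteq> {}"
  proof -
    obtain x where x: "x \<in> U"
      using insert.prems by blast
    then obtain e where e: "e > 0" "ball x e \<subseteq> U"
      using insert.prems open_contains_ball by blast
    have "n \<noteq> 0"
      using insert.prems by auto
    define y where "y = x + (e / 2 / norm n) *\<^sub>R n"
    have "y \<in> U"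
      using e \<open>n \<noteq> 0\<close> by (auto simp: y_def dist_norm intro!: subsetD[OF e(2)])
    moreover have "n \<bullet> x \<noteq> 0 \<or> n \<bullet> y \<noteq> 0"
      using \<open>n \<noteq> 0\<close> e(1) by (auto simp: y_def inner_add_right)
    ultimately show ?thesis
      using x U'_def by blast
  qed
  ultimately obtain x where "x \<in> U'" "\<forall>m\<in>N. m \<bullet> x \<noteq> 0"
    using insert.IH insert.prems by blast
  then show ?case
    using U'_def by auto
qed

text \<open>One hyperplane for each triple of vertices; the previous lemma applies to every triple
  because three distinct points of a sphere are never collinear.\<close>

lemma exists_start_off_vertex_triple_hyperplanes:
  fixes P :: "'a::euclidean_space set"
  assumes "polytope P" "\<forall>x. x extreme_point_of P \<longrightarrow> norm x = r" "open U" "U \<noteq> {}"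
  obtains c0 where "c0 \<in> U"
    "\<And>p q s t. p extreme_point_of P \<Longrightarrow> q extreme_point_of P \<Longrightarrow> s extreme_point_of P \<Longrightarrow>
      p \<noteq> q \<Longrightarrow> p \<noteq> s \<Longrightarrow> q \<noteq> s \<Longrightarrow> t \<noteq> 1 \<Longrightarrow>
      ((1 - t) *\<^sub>R c0 + t *\<^sub>R c1) \<bullet> (q - p) = 0 \<Longrightarrow> ((1 - t) *\<^sub>R c0 + t *\<^sub>R c1) \<bullet> (s - p) = 0 \<Longrightarrow>
      False"
proof -
  define E where "E = {x. x extreme_point_of P}"
  define T where "T = {(p, q, s). p \<in> E \<and> q \<in> E \<and> s \<in> E \<and> p \<noteq> q \<and> p \<noteq> s \<and> q \<noteq> s}"
  define normal where "normal = (\<lambda>(p, q, s) n. n \<noteq> 0 \<and> (\<forall>c0 t. t \<noteq> 1 \<longrightarrow>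
    ((1 - t) *\<^sub>R c0 + t *\<^sub>R c1) \<bullet> (q - p) = 0 \<longrightarrow>
    ((1 - t) *\<^sub>R c0 + t *\<^sub>R c1) \<bullet> (s - p) = 0 \<longrightarrow> n \<bullet> c0 = 0))"
  have "finite E"
    unfolding E_def by (rule finite_polyhedron_extreme_points[OF polytope_imp_polyhedron[OF assms(1)]])
  moreover have "T \<subseteq> E \<times> E \<times> E"
    by (auto simp: T_def)
  ultimately have "finite T"
    by (meson finite_SigmaI finite_subset)
  have "\<exists>n. normal \<tau> n" if "\<tau> \<in> T" for \<tau>
  proof -
    obtain p q s where \<tau>: "\<tau> = (p, q, s)" "p \<in> E" "q \<in> E" "s \<in> E" "p \<noteq> q" "p \<noteq> s" "q \<noteq> s"
      using \<open>\<tau> \<in> T\<close> by (auto simp: T_def)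
    then have "norm p = r" "norm q = r" "norm s = r"
      using assms(2) by (auto simp: E_def)
    then obtain n where "n \<noteq> 0" "\<And>c0 t. t \<noteq> 1 \<Longrightarrow> ((1 - t) *\<^sub>R c0 + t *\<^sub>R c1) \<bullet> (q - p) = 0 \<Longrightarrow>
        ((1 - t) *\<^sub>R c0 + t *\<^sub>R c1) \<bullet> (s - p) = 0 \<Longrightarrow> n \<bullet> c0 = 0"
      using segment_meets_orthogonal_complement_hyperplane
        sphere_three_points_affinely_independent \<tau>(5-7) by metis
    then show ?thesis
      by (auto simp: normal_def \<tau>(1))
  qed
  then obtain n where n: "\<And>\<tau>. \<tau> \<in> T \<Longrightarrow> normal \<tau> (n \<tau>)"
    by metis
  have "\<exists>c0\<in>U. \<forall>m\<in>n ` T. m \<bullet> c0 \<noteq> 0"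
    using n \<open>finite T\<close> assms(3,4) by (intro open_avoids_finite_hyperplanes) (auto simp: normal_def)
  then obtain c0 where c0: "c0 \<in> U" "\<And>\<tau>. \<tau> \<in> T \<Longrightarrow> n \<tau> \<bullet> c0 \<noteq> 0"
    by blast
  show ?thesis
  proof (rule that[OF c0(1)])
    fix p q s and t :: real
    assume "p extreme_point_of P" "q extreme_point_of P" "s extreme_point_of P"
      "p \<noteq> q" "p \<noteq> s" "q \<noteq> s" "t \<noteq> 1"
      and orth: "((1 - t) *\<^sub>R c0 + t *\<^sub>R c1) \<bullet> (q - p) = 0" "((1 - t) *\<^sub>R c0 + t *\<^sub>R c1) \<bullet> (s - p) = 0"
    then have "(p, q, s) \<in> T"
      by (simp add: T_def E_def)
    then have "n (p, q, s) \<bullet> c0 = 0"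
      using n[OF \<open>(p, q, s) \<in> T\<close>] \<open>t \<noteq> 1\<close> orth by (simp add: normal_def)
    then show False
      using c0(2) \<open>(p, q, s) \<in> T\<close> by blast
  qed
qed

lemma exists_generic_segment:
  fixes P :: "'a::euclidean_space set"
  assumes "polytope P" "P \<noteq> {}" "\<forall>x. x extreme_point_of P \<longrightarrow> norm x = r" "open U" "U \<noteq> {}"
  obtains c0 where "c0 \<in> U"
    "\<And>c. c \<in> open_segment c0 c1 \<Longrightarrow> \<exists>a b. max_face P c = closed_segment a b"
proof -
  obtain c0 where c0: "c0 \<in> U"
    "\<And>p q s t. p extreme_point_of P \<Longrightarrow> q extreme_point_of P \<Longrightarrow> s extreme_point_of P \<Longrightarrow>
      p \<noteq> q \<Longrightarrow> p \<noteq> s \<Longrightarrow> q \<noteq> s \<Longrightarrow> t \<noteq> 1 \<Longrightarrow>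
      ((1 - t) *\<^sub>R c0 + t *\<^sub>R c1) \<bullet> (q - p) = 0 \<Longrightarrow> ((1 - t) *\<^sub>R c0 + t *\<^sub>R c1) \<bullet> (s - p) = 0 \<Longrightarrow>
      False"
    using exists_start_off_vertex_triple_hyperplanes[OF assms(1,3-5)] by blast
  have "\<exists>a b. max_face P c = closed_segment a b" if "c \<in> open_segment c0 c1" for c
  proof -
    obtain t where t: "t < 1" "c = (1 - t) *\<^sub>R c0 + t *\<^sub>R c1"
      using \<open>c \<in> open_segment c0 c1\<close> by (auto simp: in_segment)
    have "p = q \<or> p = s \<or> q = s"
      if ext: "p extreme_point_of max_face P c" "q extreme_point_of max_face P c"
        "s extreme_point_of max_face P c" for p q s
    proof (rule ccontr)
      assume distinct: "\<not> (p = q \<or> p = s \<or> q = s)"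
      have "x extreme_point_of P" "x \<in> max_face P c" if "x \<in> {p, q, s}" for x
        using that ext extreme_point_of_face[OF polytope_max_face(1)[OF assms(1)]] by auto
      moreover have "c \<bullet> (q - p) = 0" "c \<bullet> (s - p) = 0"
        using max_face_inner_eq[of q P c p] max_face_inner_eq[of s P c p] calculation(2)
        by (auto simp: inner_diff_right)
      ultimately show False
        using c0(2)[of p q s t] distinct less_imp_neq[OF t(1)] t(2) by auto
    qed
    moreover have "max_face P c \<noteq> {}"
      using max_face_nonempty polytope_imp_compact assms(1,2) by blast
    ultimately show ?thesis
      using closed_segment_if_no_three_extreme_points polytope_max_face(2,3)[OF assms(1)] by metis
  qed
  then show ?thesis
    using that c0(1) by blast
qed

lemma max_face_eq_along_segment:
  fixes P P' :: "'a::euclidean_space set"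
  assumes "polytope P" "polytope P'" "P' \<noteq> {}"
    and rP: "\<forall>x. x extreme_point_of P \<longrightarrow> norm x = r"
    and rP': "\<forall>x. x extreme_point_of P' \<longrightarrow> norm x = r"
    and N: "\<And>c. normal_cone P (max_face P c) = normal_cone P' (max_face P' c)"
    and segment: "\<And>c. c \<in> closed_segment c0 c1 \<Longrightarrow> \<exists>a b. max_face P c = closed_segment a b"
    and start: "max_face P c0 = max_face P' c0"
  shows "max_face P c1 = max_face P' c1"
proof (rule connected_induction_simple[OF connected_segment])
  show "c0 \<in> closed_segment c0 c1" "c1 \<in> closed_segment c0 c1"
    by simp_all
  show "max_face P c0 = max_face P' c0"
    by (rule start)
  fix c
  assume c: "c \<in> closed_segment c0 c1"
  then obtain a b where "max_face P c = closed_segment a b"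
    using segment by blast
  then obtain S where S: "open S" "c \<in> S"
    "\<forall>c'\<in>S. max_face P c' = max_face P' c' \<longleftrightarrow> max_face P c = max_face P' c"
    using eventually_max_face_eq_iff[OF assms(1-3) rP rP' N] unfolding eventually_nhds by metis
  have "openin (top_of_set (closed_segment c0 c1)) (closed_segment c0 c1 \<inter> S)"
    using S(1) by (rule openin_open_Int)
  moreover have "c \<in> closed_segment c0 c1 \<inter> S"
    using c S(2) by blast
  moreover have "\<forall>x\<in>closed_segment c0 c1 \<inter> S. \<forall>y\<in>closed_segment c0 c1 \<inter> S.
      max_face P x = max_face P' x \<longrightarrow> max_face P y = max_face P' y"
    using S(3) by blast
  ultimately show "\<exists>T. openin (top_of_set (closed_segment c0 c1)) T \<and> c \<in> T \<and>
      (\<forall>x\<in>T. \<forall>y\<in>T. max_face P x = max_face P' x \<longrightarrow> max_face P y = max_face P' y)"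
    by blast
qed

lemma extreme_point_mem_if_same_fan:
  fixes P P' :: "'a::euclidean_space set"
  assumes "polytope P" "polytope P'"
    and rP: "\<forall>x. x extreme_point_of P \<longrightarrow> norm x = r"
    and rP': "\<forall>x. x extreme_point_of P' \<longrightarrow> norm x = r"
    and fan: "normal_fan P = normal_fan P'"
    and v: "v extreme_point_of P" "v extreme_point_of P'"
    and Nv: "normal_cone P {v} = normal_cone P' {v}"
    and w: "w extreme_point_of P"
  shows "w \<in> P'"
proof -
  have ne: "P \<noteq> {}" "P' \<noteq> {}"
    using v by (auto simp: extreme_point_of_def)
  have N: "\<And>c. normal_cone P (max_face P c) = normal_cone P' (max_face P' c)"
    using normal_fan_eq_imp_normal_cone_max_face_eq[OF fan assms(1,2) ne] .
  obtain c1 where c1: "max_face P c1 = {w}"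
    using polytope_extreme_point_max_face[OF assms(1) w] .
  define U where "U = interior (normal_cone P {v})"
  have U: "max_face P c = {v}" "max_face P' c = {v}" if "c \<in> U" for c
  proof -
    have "c \<in> interior (normal_cone P {v})" "c \<in> interior (normal_cone P' {v})"
      using that Nv by (simp_all add: U_def)
    then show "max_face P c = {v}" "max_face P' c = {v}"
      by (simp_all add: interior_normal_cone_imp_max_face_eq)
  qed
  obtain cv where "max_face P cv = {v}"
    using polytope_extreme_point_max_face[OF assms(1) v(1)] .
  then have "U \<noteq> {}"
    using max_face_eq_singleton_imp_interior_normal_cone[OF assms(1)] by (auto simp: U_def)
  then obtain c0 where c0: "c0 \<in> U"
    "\<And>c. c \<in> open_segment c0 c1 \<Longrightarrow> \<exists>a b. max_face P c = closed_segment a b"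
    using exists_generic_segment[OF assms(1) ne(1) rP] by (metis U_def open_interior)
  have segment: "\<exists>a b. max_face P c = closed_segment a b" if c: "c \<in> closed_segment c0 c1" for c
  proof (cases "c \<in> open_segment c0 c1")
    case False
    then have "c = c0 \<or> c = c1"
      using c by (auto simp: open_segment_def)
    then have "max_face P c = closed_segment v v \<or> max_face P c = closed_segment w w"
      using U(1)[OF c0(1)] c1 by auto
    then show ?thesis
      by blast
  qed (rule c0(2))
  have "max_face P c1 = max_face P' c1"
    using max_face_eq_along_segment[OF assms(1,2) ne(2) rP rP' N segment] U c0(1) by simp
  then show ?thesis
    using c1 max_face_subset by blast
qed

lemma polytope_subset_if_extreme_points_mem:
  fixes P :: "'a::euclidean_space set"
  assumes "polytope P" "convex Q" "\<And>x. x extreme_point_of P \<Longrightarrow> x \<in> Q"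
  shows "P \<subseteq> Q"
proof -
  have "P = convex hull {x. x extreme_point_of P}"
    using Krein_Milman_Minkowski polytope_imp_compact polytope_imp_convex assms(1) by blast
  also have "\<dots> \<subseteq> Q"
    using assms(2,3) by (intro hull_minimal subsetI) auto
  finally show ?thesis .
qed

theorem lemma2p2:
  fixes P P' :: "'a::euclidean_space set" and v :: 'a
  assumes "polytope P" and "polytope P'"
    and "inscribed_origin P" and "inscribed_origin P'"
    and "normal_fan P = normal_fan P'"
    and "v extreme_point_of P" and "v extreme_point_of P'"
    and "normal_cone P {v} = normal_cone P' {v}"
  shows "P = P'"
proof -
  have rP: "\<forall>x. x extreme_point_of P \<longrightarrow> norm x = norm v"
    using assms(3,6) by (auto simp: inscribed_origin_def)
  have rP': "\<forall>x. x extreme_point_of P' \<longrightarrow> norm x = norm v"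
    using assms(4,7) by (auto simp: inscribed_origin_def)
  show ?thesis
  proof (rule subset_antisym)
    show "P \<subseteq> P'"
      using extreme_point_mem_if_same_fan[OF assms(1,2) rP rP' assms(5-8)]
      by (intro polytope_subset_if_extreme_points_mem assms(1) polytope_imp_convex assms(2))
    show "P' \<subseteq> P"
      using extreme_point_mem_if_same_fan[OF assms(2,1) rP' rP assms(5)[symmetric] assms(7,6)
          assms(8)[symmetric]]
      by (intro polytope_subset_if_extreme_points_mem assms(2) polytope_imp_convex assms(1))
  qed
qed

end
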